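(* Let $A, B \in \mathbb{R}^{n\times n}_+$ be entrywise nonnegative Schur-stable matrices, and assume at least one of $A$, $B$ is irreducible. Suppose there exists a vector $v\in\mathbb{R}^n$ with all entries strictly positive such that (1) $v^TA\le v^T$ and $v^TB\le v^T$ (entrywise), and (2) every entry of $v^T(A+B)$ is strictly less than the corresponding entry of $2v^T$. Let $\mathcal{D}_{A,B}$ be the set of diagonal matrices $D\in\mathbb{R}^{n\times n}$ with nonnegative diagonal entries such that $A-D$ and $B-D$ are both entrywise nonnegative. Then for every $D\in\mathcal{D}_{A,B}$ the matrix $$M=\begin{pmatrix} A-D & D\\ D & B-D\end{pmatrix}$$ is Schur-stable.
   Context: A real square matrix is Schur-stable if its spectral radius is strictly less than $1$. A matrix $A\in\mathbb{R}^{n\times n}$ is reducible if there exist nonempty disjoint sets $I,J$ with $I\cup J=\{1,\dots,n\}$ such that $a_{ij}=0$ for all $i\in I$, $j\in J$; otherwise it is irreducible. $\mathbb{R}^{n\times n}_+$ denotes the set of entrywise nonnegative $n\times n$ real matrices. A vector $v$ as in the hypothesis is said to define a joint linear copositive Lyapunov function $V(x)=v^Tx$ for $A,B$. *)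

theory Defs
  imports "Jordan_Normal_Form.Spectral_Radius"
begin

definition schur_stable :: "real mat \<Rightarrow> bool" where
  "schur_stable A \<longleftrightarrow> spectral_radius (map_mat complex_of_real A) < 1"

definition nonneg_mat :: "nat \<Rightarrow> real mat \<Rightarrow> bool" where
  "nonneg_mat n A \<longleftrightarrow> (\<forall>i<n. \<forall>j<n. A $$ (i, j) \<ge> 0)"

definition reducible_mat :: "nat \<Rightarrow> real mat \<Rightarrow> bool" where
  "reducible_mat n A \<longleftrightarrow> (\<exists>I J. I \<noteq> {} \<and> J \<noteq> {} \<and> I \<inter> J = {} \<and> I \<union> J = {0..<n}
      \<and> (\<forall>i\<in>I. \<forall>j\<in>J. A $$ (i, j) = 0))"

definition irreducible_mat :: "nat \<Rightarrow> real mat \<Rightarrow> bool" where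
  "irreducible_mat n A \<longleftrightarrow> \<not> reducible_mat n A"

definition D_set :: "nat \<Rightarrow> real mat \<Rightarrow> real mat \<Rightarrow> real mat set" where
  "D_set n A B = {D. D \<in> carrier_mat n n \<and> diagonal_mat D \<and> (\<forall>i<n. D $$ (i, i) \<ge> 0)
      \<and> nonneg_mat n (A - D) \<and> nonneg_mat n (B - D)}"

end

theory Submission
  imports Defs
begin

text \<open>If M were not Schur-stable it would have an eigenvector x with eigenvalue of modulus
  at least 1; as M is nonnegative, y = |x| satisfies y \<le> M y. Write y = (p, q). Adding the two
  block rows, the D-couplings cancel: p + q \<le> A p + B q. Weighting this by v and using
  v^T A \<le> v^T, v^T B \<le> v^T, the total defect equals -(s\<cdot>p + t\<cdot>q) for the slacks
  s, t \<ge> 0 of v, so all inequalities are tight; since s + t > 0, at each index p or q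
  vanishes. Then each block row loses its coupling term, giving A p = p and B q = q, and
  one of p, q is a nonzero fixed vector, contradicting the stability of A or B.\<close>

lemma sum_lessThan_add:
  fixes f :: "nat \<Rightarrow> 'a::comm_monoid_add"
  shows "(\<Sum>j<n + m. f j) = (\<Sum>j<n. f j) + (\<Sum>j<m. f (n + j))"
  by (induct m) (simp_all add: add.assoc)

lemma sum_weighted_row_sums:
  fixes v p :: "nat \<Rightarrow> 'a::comm_semiring_1"
  shows "(\<Sum>i<n. v i * (\<Sum>j<n. a i j * p j)) = (\<Sum>j<n. (\<Sum>i<n. v i * a i j) * p j)"
proof -
  have "(\<Sum>i<n. v i * (\<Sum>j<n. a i j * p j)) = (\<Sum>i<n. \<Sum>j<n. v i * a i j * p j)"
    by (simp add: sum_distrib_left mult.assoc)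
  also have "\<dots> = (\<Sum>j<n. \<Sum>i<n. v i * a i j * p j)" by (rule sum.swap)
  also have "\<dots> = (\<Sum>j<n. (\<Sum>i<n. v i * a i j) * p j)" by (simp add: sum_distrib_right)
  finally show ?thesis .
qed

lemma joint_copositive_balance:
  fixes a b :: "nat \<Rightarrow> nat \<Rightarrow> real" and v p q :: "nat \<Rightarrow> real"
  assumes v0: "\<And>i. i < n \<Longrightarrow> v i > 0"
    and p0: "\<And>i. i < n \<Longrightarrow> p i \<ge> 0" and q0: "\<And>i. i < n \<Longrightarrow> q i \<ge> 0"
    and vA: "\<And>j. j < n \<Longrightarrow> (\<Sum>i<n. v i * a i j) \<le> v j"
    and vB: "\<And>j. j < n \<Longrightarrow> (\<Sum>i<n. v i * b i j) \<le> v j"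
    and vAB: "\<And>j. j < n \<Longrightarrow> (\<Sum>i<n. v i * a i j) + (\<Sum>i<n. v i * b i j) < 2 * v j"
    and sub: "\<And>i. i < n \<Longrightarrow> p i + q i \<le> (\<Sum>j<n. a i j * p j) + (\<Sum>j<n. b i j * q j)"
    and i: "i < n"
  shows "(\<Sum>j<n. a i j * p j) + (\<Sum>j<n. b i j * q j) = p i + q i"
    and "p i = 0 \<or> q i = 0"
proof -
  define r where "r i = (\<Sum>j<n. a i j * p j) + (\<Sum>j<n. b i j * q j) - p i - q i" for i
  define s where "s j = v j - (\<Sum>i<n. v i * a i j)" for j
  define t where "t j = v j - (\<Sum>i<n. v i * b i j)" for j
  have r0: "j < n \<Longrightarrow> v j * r j \<ge> 0" for j
    using sub[of j] v0[of j] by (simp add: r_def)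
  have st0: "j < n \<Longrightarrow> s j * p j + t j * q j \<ge> 0" for j
    using vA[of j] vB[of j] p0[of j] q0[of j] by (simp add: s_def t_def)
  have "(\<Sum>j<n. v j * r j) = (\<Sum>i<n. v i * (\<Sum>j<n. a i j * p j))
      + (\<Sum>i<n. v i * (\<Sum>j<n. b i j * q j)) - (\<Sum>j<n. v j * p j) - (\<Sum>j<n. v j * q j)"
    by (simp add: r_def ring_distribs sum.distrib sum_subtractf)
  also have "\<dots> = (\<Sum>j<n. (\<Sum>i<n. v i * a i j) * p j) + (\<Sum>j<n. (\<Sum>i<n. v i * b i j) * q j)
      - (\<Sum>j<n. v j * p j) - (\<Sum>j<n. v j * q j)"
    by (simp only: sum_weighted_row_sums)
  also have "\<dots> = - (\<Sum>j<n. s j * p j + t j * q j)"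
    by (simp add: s_def t_def left_diff_distrib sum.distrib sum_subtractf)
  finally have balance: "(\<Sum>j<n. v j * r j) = - (\<Sum>j<n. s j * p j + t j * q j)" .
  have "(\<Sum>j<n. v j * r j) \<ge> 0" "(\<Sum>j<n. s j * p j + t j * q j) \<ge> 0"
    using r0 st0 by (intro conjI sum_nonneg; simp)+
  then have "(\<Sum>j<n. v j * r j) = 0" "(\<Sum>j<n. s j * p j + t j * q j) = 0"
    using balance by linarith+
  then have "v i * r i = 0" "s i * p i + t i * q i = 0"
    using r0 st0 i sum_nonneg_eq_0_iff[of "{..<n}" "\<lambda>j. v j * r j"]
      sum_nonneg_eq_0_iff[of "{..<n}" "\<lambda>j. s j * p j + t j * q j"]
    by auto
  then show "(\<Sum>j<n. a i j * p j) + (\<Sum>j<n. b i j * q j) = p i + q i"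
    using v0[OF i] by (simp add: r_def)
  have "s i * p i = 0" "t i * q i = 0" "s i + t i > 0"
    using \<open>s i * p i + t i * q i = 0\<close> vA[OF i] vB[OF i] vAB[OF i] p0[OF i] q0[OF i]
    by (simp_all add: s_def t_def add_nonneg_eq_0_iff)
  then show "p i = 0 \<or> q i = 0" by auto
qed

lemma joint_copositive_coupled_fixed:
  fixes a b :: "nat \<Rightarrow> nat \<Rightarrow> real" and d v p q :: "nat \<Rightarrow> real"
  assumes a0: "\<And>i j. i < n \<Longrightarrow> j < n \<Longrightarrow> a i j \<ge> 0"
    and b0: "\<And>i j. i < n \<Longrightarrow> j < n \<Longrightarrow> b i j \<ge> 0"
    and d0: "\<And>i. i < n \<Longrightarrow> d i \<ge> 0"
    and v0: "\<And>i. i < n \<Longrightarrow> v i > 0"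
    and p0: "\<And>i. i < n \<Longrightarrow> p i \<ge> 0" and q0: "\<And>i. i < n \<Longrightarrow> q i \<ge> 0"
    and vA: "\<And>j. j < n \<Longrightarrow> (\<Sum>i<n. v i * a i j) \<le> v j"
    and vB: "\<And>j. j < n \<Longrightarrow> (\<Sum>i<n. v i * b i j) \<le> v j"
    and vAB: "\<And>j. j < n \<Longrightarrow> (\<Sum>i<n. v i * a i j) + (\<Sum>i<n. v i * b i j) < 2 * v j"
    and hp: "\<And>i. i < n \<Longrightarrow> p i + d i * p i \<le> (\<Sum>j<n. a i j * p j) + d i * q i"
    and hq: "\<And>i. i < n \<Longrightarrow> q i + d i * q i \<le> (\<Sum>j<n. b i j * q j) + d i * p i"
    and i: "i < n"
  shows "(\<Sum>j<n. a i j * p j) = p i" and "(\<Sum>j<n. b i j * q j) = q i"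
proof -
  have sub: "p k + q k \<le> (\<Sum>j<n. a k j * p j) + (\<Sum>j<n. b k j * q j)" if "k < n" for k
    using hp[OF that] hq[OF that] by linarith
  note balance = joint_copositive_balance[OF v0 p0 q0 vA vB vAB sub i]
  have Ap: "(\<Sum>j<n. a i j * p j) \<ge> 0" and Bq: "(\<Sum>j<n. b i j * q j) \<ge> 0"
    using a0 b0 p0 q0 i by (auto intro!: sum_nonneg)
  have "p i \<le> (\<Sum>j<n. a i j * p j)" "q i \<le> (\<Sum>j<n. b i j * q j)"
    using balance(2) hp[OF i] hq[OF i] Ap Bq
      mult_nonneg_nonneg[OF d0[OF i] p0[OF i]] mult_nonneg_nonneg[OF d0[OF i] q0[OF i]]
    by auto
  with balance(1) show "(\<Sum>j<n. a i j * p j) = p i" "(\<Sum>j<n. b i j * q j) = q i"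
    by linarith+
qed

lemma sum_diagonal_mat_row:
  fixes D :: "'a::semiring_0 mat"
  assumes "D \<in> carrier_mat n n" and "diagonal_mat D" and "i < n"
  shows "(\<Sum>j<n. D $$ (i, j) * f j) = D $$ (i, i) * f i"
proof -
  have "(\<Sum>j<n. D $$ (i, j) * f j) = (\<Sum>j<n. if j = i then D $$ (i, i) * f i else 0)"
    using assms unfolding diagonal_mat_def by (intro sum.cong) auto
  with assms(3) show ?thesis by simp
qed

lemma nonneg_mat_four_block:
  assumes "P \<in> carrier_mat n n" "Q \<in> carrier_mat n n" "R \<in> carrier_mat n n" "S \<in> carrier_mat n n"
    and "nonneg_mat n P" "nonneg_mat n Q" "nonneg_mat n R" "nonneg_mat n S"
  shows "nonneg_mat (n + n) (four_block_mat P Q R S)"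
  using assms by (auto simp: nonneg_mat_def)

lemma four_block_mat_row_sums:
  fixes P Q R S :: "'a::semiring_0 mat"
  assumes "P \<in> carrier_mat n n" "Q \<in> carrier_mat n n" "R \<in> carrier_mat n n" "S \<in> carrier_mat n n"
    and "i < n"
  shows "(\<Sum>j<n + n. four_block_mat P Q R S $$ (i, j) * y j)
      = (\<Sum>j<n. P $$ (i, j) * y j) + (\<Sum>j<n. Q $$ (i, j) * y (n + j))"
    and "(\<Sum>j<n + n. four_block_mat P Q R S $$ (n + i, j) * y j)
      = (\<Sum>j<n. R $$ (i, j) * y j) + (\<Sum>j<n. S $$ (i, j) * y (n + j))"
  using assms by (simp_all add: sum_lessThan_add)

lemma not_schur_stable_eigenvector:
  assumes "M \<in> carrier_mat m m" and "m > 0" and "\<not> schur_stable M"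
  obtains lam x where "eigenvector (map_mat complex_of_real M) x lam" and "norm lam \<ge> 1"
proof -
  have "map_mat complex_of_real M \<in> carrier_mat m m" using assms(1) by simp
  from spectral_radius_mem_max(1)[OF this assms(2)] obtain lam where
    "lam \<in> spectrum (map_mat complex_of_real M)"
    and "spectral_radius (map_mat complex_of_real M) = norm lam"
    by auto
  with assms(3) that show ?thesis
    unfolding schur_stable_def spectrum_def eigenvalue_def by auto
qed

lemma eigenvector_abs_subinvariant:
  fixes M :: "real mat"
  assumes M: "M \<in> carrier_mat m m" and M0: "nonneg_mat m M"
    and ev: "eigenvector (map_mat complex_of_real M) x lam" and lam: "norm lam \<ge> 1"
    and i: "i < m"
  shows "cmod (x $ i) \<le> (\<Sum>j<m. M $$ (i, j) * cmod (x $ j))"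
proof -
  have x: "x \<in> carrier_vec m" and Mx: "map_mat complex_of_real M *\<^sub>v x = lam \<cdot>\<^sub>v x"
    using ev M unfolding eigenvector_def by auto
  have "cmod (x $ i) \<le> norm lam * cmod (x $ i)"
    using lam by (simp add: mult_le_cancel_right1)
  also have "\<dots> = cmod ((map_mat complex_of_real M *\<^sub>v x) $ i)"
    using Mx x i by (simp add: norm_mult)
  also have "\<dots> = cmod (\<Sum>j<m. complex_of_real (M $$ (i, j)) * x $ j)"
    using M x i by (simp add: mult_mat_vec_def scalar_prod_def lessThan_atLeast0)
  also have "\<dots> \<le> (\<Sum>j<m. cmod (complex_of_real (M $$ (i, j)) * x $ j))"
    by (rule norm_sum)
  also have "\<dots> = (\<Sum>j<m. M $$ (i, j) * cmod (x $ j))"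
    using M0 i by (intro sum.cong) (auto simp: norm_mult nonneg_mat_def)
  finally show ?thesis .
qed

lemma fixed_vector_not_schur_stable:
  fixes A :: "real mat" and p :: "nat \<Rightarrow> real"
  assumes A: "A \<in> carrier_mat n n" and k: "k < n" "p k \<noteq> 0"
    and fixed: "\<And>i. i < n \<Longrightarrow> (\<Sum>j<n. A $$ (i, j) * p j) = p i"
  shows "\<not> schur_stable A"
proof
  assume stable: "schur_stable A"
  let ?Ac = "map_mat complex_of_real A" and ?pc = "vec n (\<lambda>i. complex_of_real (p i))"
  have "?Ac *\<^sub>v ?pc = 1 \<cdot>\<^sub>v ?pc"
  proof (rule eq_vecI)
    fix i assume "i < dim_vec (1 \<cdot>\<^sub>v ?pc)"
    then have i: "i < n" by simp
    have "(?Ac *\<^sub>v ?pc) $ i = complex_of_real (\<Sum>j<n. A $$ (i, j) * p j)"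
      using A i by (simp add: mult_mat_vec_def scalar_prod_def lessThan_atLeast0)
    then show "(?Ac *\<^sub>v ?pc) $ i = (1 \<cdot>\<^sub>v ?pc) $ i" using fixed[OF i] i by simp
  qed (use A in simp)
  moreover have "?pc \<noteq> 0\<^sub>v n"
    using k by (metis index_vec index_zero_vec(1) of_real_eq_0_iff)
  ultimately have "eigenvalue ?Ac 1"
    using A unfolding eigenvalue_def eigenvector_def by (intro exI[of _ ?pc]) auto
  then have "norm (1::complex) \<in> norm ` spectrum ?Ac" unfolding spectrum_def by blast
  from spectral_radius_mem_max(2)[OF _ _ this, of n] A k stable show False
    unfolding schur_stable_def by simp
qed

lemma coupled_block_row_sums:
  fixes A B D :: "real mat"
  assumes A: "A \<in> carrier_mat n n" and B: "B \<in> carrier_mat n n" and D: "D \<in> carrier_mat n n"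
    and dg: "diagonal_mat D" and i: "i < n"
  shows "(\<Sum>j<n + n. four_block_mat (A - D) D D (B - D) $$ (i, j) * y j) + D $$ (i, i) * y i
      = (\<Sum>j<n. A $$ (i, j) * y j) + D $$ (i, i) * y (n + i)"
    and "(\<Sum>j<n + n. four_block_mat (A - D) D D (B - D) $$ (n + i, j) * y j) + D $$ (i, i) * y (n + i)
      = (\<Sum>j<n. B $$ (i, j) * y (n + j)) + D $$ (i, i) * y i"
proof -
  have minus: "(\<Sum>j<n. (X - D) $$ (i, j) * z j) = (\<Sum>j<n. X $$ (i, j) * z j) - D $$ (i, i) * z i"
    if "X \<in> carrier_mat n n" for X and z :: "nat \<Rightarrow> real"
    using that D dg i
    by (simp add: left_diff_distrib sum_subtractf sum_diagonal_mat_row[OF D dg i])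
  have "A - D \<in> carrier_mat n n" "B - D \<in> carrier_mat n n" using A B D by auto
  note rows = four_block_mat_row_sums[OF this(1) D D this(2) i, of y]
  show "(\<Sum>j<n + n. four_block_mat (A - D) D D (B - D) $$ (i, j) * y j) + D $$ (i, i) * y i
      = (\<Sum>j<n. A $$ (i, j) * y j) + D $$ (i, i) * y (n + i)"
    unfolding rows minus[OF A] sum_diagonal_mat_row[OF D dg i, of "\<lambda>j. y (n + j)"] by simp
  show "(\<Sum>j<n + n. four_block_mat (A - D) D D (B - D) $$ (n + i, j) * y j) + D $$ (i, i) * y (n + i)
      = (\<Sum>j<n. B $$ (i, j) * y (n + j)) + D $$ (i, i) * y i"
    unfolding rows minus[OF B] sum_diagonal_mat_row[OF D dg i, of y] by simp
qed

lemma D_set_nonneg_mat: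
  assumes "D \<in> D_set n A B"
  shows "nonneg_mat n D"
  using assms unfolding D_set_def nonneg_mat_def diagonal_mat_def
  by (metis (mono_tags, lifting) carrier_matD mem_Collect_eq order_refl)

lemma nonneg_mat_coupled_block:
  assumes "A \<in> carrier_mat n n" "B \<in> carrier_mat n n" and D: "D \<in> D_set n A B"
  shows "nonneg_mat (n + n) (four_block_mat (A - D) D D (B - D))"
  using assms D_set_nonneg_mat[OF D] unfolding D_set_def by (intro nonneg_mat_four_block) auto

lemma coupled_block_subinvariant_fixed:
  fixes A B D :: "real mat" and v :: "real vec" and y :: "nat \<Rightarrow> real"
  assumes A: "A \<in> carrier_mat n n" and B: "B \<in> carrier_mat n n"
    and nonnegA: "nonneg_mat n A" and nonnegB: "nonneg_mat n B"
    and vpos: "\<forall>i<n. v $ i > 0"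
    and vA: "\<forall>j<n. (\<Sum>i<n. v $ i * A $$ (i, j)) \<le> v $ j"
    and vB: "\<forall>j<n. (\<Sum>i<n. v $ i * B $$ (i, j)) \<le> v $ j"
    and vAB: "\<forall>j<n. (\<Sum>i<n. v $ i * (A + B) $$ (i, j)) < 2 * v $ j"
    and D: "D \<in> D_set n A B"
    and y0: "\<And>j. y j \<ge> 0"
    and sub: "\<And>i. i < n + n \<Longrightarrow> y i \<le> (\<Sum>j<n + n. four_block_mat (A - D) D D (B - D) $$ (i, j) * y j)"
    and i: "i < n"
  shows "(\<Sum>j<n. A $$ (i, j) * y j) = y i" and "(\<Sum>j<n. B $$ (i, j) * y (n + j)) = y (n + i)"
proof -
  from D have Dc: "D \<in> carrier_mat n n" and dg: "diagonal_mat D" unfolding D_set_def by auto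
  have vAB': "(\<Sum>i<n. v $ i * A $$ (i, j)) + (\<Sum>i<n. v $ i * B $$ (i, j)) < 2 * v $ j" if "j < n" for j
    using vAB A B that by (simp add: distrib_left sum.distrib)
  have hp: "y k + D $$ (k, k) * y k \<le> (\<Sum>j<n. A $$ (k, j) * y j) + D $$ (k, k) * y (n + k)"
    if "k < n" for k
    using sub[of k] coupled_block_row_sums(1)[OF A B Dc dg that, of y] that by linarith
  have hq: "y (n + k) + D $$ (k, k) * y (n + k)
      \<le> (\<Sum>j<n. B $$ (k, j) * y (n + j)) + D $$ (k, k) * y k" if "k < n" for k
    using sub[of "n + k"] coupled_block_row_sums(2)[OF A B Dc dg that, of y] that by linarith
  have "A $$ (k, j) \<ge> 0" "B $$ (k, j) \<ge> 0" "D $$ (k, j) \<ge> 0" if "k < n" "j < n" for k j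
    using nonnegA nonnegB D_set_nonneg_mat[OF D] that unfolding nonneg_mat_def by auto
  then show "(\<Sum>j<n. A $$ (i, j) * y j) = y i" "(\<Sum>j<n. B $$ (i, j) * y (n + j)) = y (n + i)"
    using joint_copositive_coupled_fixed[where a = "\<lambda>i j. A $$ (i, j)" and b = "\<lambda>i j. B $$ (i, j)"
        and d = "\<lambda>i. D $$ (i, i)" and v = "\<lambda>i. v $ i" and p = y and q = "\<lambda>i. y (n + i)",
        OF _ _ _ _ _ _ _ _ vAB' hp hq i] vpos vA vB y0
    by simp_all
qed

theorem theorem3:
  fixes n :: nat and A B D :: "real mat" and v :: "real vec"
  assumes n: "n > 0"
    and A: "A \<in> carrier_mat n n" and B: "B \<in> carrier_mat n n"
    and nonnegA: "nonneg_mat n A" and nonnegB: "nonneg_mat n B"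
    and stabA: "schur_stable A" and stabB: "schur_stable B"
    and irr: "irreducible_mat n A \<or> irreducible_mat n B"
    and v: "v \<in> carrier_vec n" and vpos: "\<forall>i<n. v $ i > 0"
    and vA: "\<forall>j<n. (\<Sum>i<n. v $ i * A $$ (i, j)) \<le> v $ j"
    and vB: "\<forall>j<n. (\<Sum>i<n. v $ i * B $$ (i, j)) \<le> v $ j"
    and vAB: "\<forall>j<n. (\<Sum>i<n. v $ i * (A + B) $$ (i, j)) < 2 * v $ j"
    and D: "D \<in> D_set n A B"
  shows "schur_stable (four_block_mat (A - D) D D (B - D))"
proof (rule ccontr)
  let ?M = "four_block_mat (A - D) D D (B - D)"
  assume unstable: "\<not> schur_stable ?M"
  have M: "?M \<in> carrier_mat (n + n) (n + n)" using A B D by (auto simp: D_set_def)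
  obtain lam x where ev: "eigenvector (map_mat complex_of_real ?M) x lam" and lam: "norm lam \<ge> 1"
    using not_schur_stable_eigenvector[OF M _ unstable] n by (metis add_gr_0)
  define y where "y j = cmod (x $ j)" for j
  have y0: "y j \<ge> 0" for j by (simp add: y_def)
  note fixed = coupled_block_subinvariant_fixed[OF A B nonnegA nonnegB vpos vA vB vAB D y0
      eigenvector_abs_subinvariant[OF M nonneg_mat_coupled_block[OF A B D] ev lam, folded y_def]]
  have "x \<in> carrier_vec (n + n)" "x \<noteq> 0\<^sub>v (n + n)"
    using ev M unfolding eigenvector_def by auto
  then obtain k where k: "k < n + n" "y k \<noteq> 0"
    unfolding y_def by (metis carrier_vecD eq_vecI index_zero_vec(1,2) norm_eq_zero)
  show False
  proof (cases "k < n")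
    case True
    from fixed_vector_not_schur_stable[OF A True k(2) fixed(1)] stabA show False by blast
  next
    case False
    then have "k - n < n" "y (n + (k - n)) \<noteq> 0" using k by auto
    from fixed_vector_not_schur_stable[OF B this fixed(2)] stabB show False by blast
  qed
qed

end
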